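(* For every integer $i\ge 5$, $\overline{\alpha}(\{1,5,2i\})=\frac{i}{2i+5}$.
   Context: For a finite set $S$ of positive integers, the distance graph $G(S)$ has vertex set $\mathbb{Z}$, with $i,j$ adjacent iff $|i-j|\in S$. The density of $A\subseteq\mathbb{Z}$ is $\delta(A)=\limsup_{N\to\infty}\frac{|A\cap[-N,N]|}{2N+1}$, and the independence ratio $\overline{\alpha}(S)$ is the supremum of $\delta(A)$ over independent sets $A$ of $G(S)$. *)

theory Defs
  imports "HOL-Analysis.Analysis" "HOL-Library.Liminf_Limsup"
begin

definition dist_adj :: "nat set \<Rightarrow> int \<Rightarrow> int \<Rightarrow> bool" where
  "dist_adj S i j \<longleftrightarrow> nat \<bar>i - j\<bar> \<in> S \<and> i \<noteq> j"

definition dist_independent :: "nat set \<Rightarrow> int set \<Rightarrow> bool" where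
  "dist_independent S A \<longleftrightarrow> (\<forall>i\<in>A. \<forall>j\<in>A. \<not> dist_adj S i j)"

definition upper_density :: "int set \<Rightarrow> ereal" where
  "upper_density A = limsup (\<lambda>N::nat. ereal (real (card (A \<inter> {- int N .. int N})) / real (2 * N + 1)))"

definition indep_ratio :: "nat set \<Rightarrow> ereal" where
  "indep_ratio S = (SUP A \<in> {A. dist_independent S A}. upper_density A)"

end

theory Submission
  imports Defs "HOL-Real_Asymp.Real_Asymp"
begin

text \<open>
  Upper bound: in any interval of length \<open>2i + 5\<close> an independent set has at most \<open>i\<close> points.
  Listing \<open>i + 1\<close> such points increasingly, consecutive gaps are at least 2, so the total excess
  of their span over \<open>2i\<close> is at most 4; the forbidden differences 5 and \<open>2i\<close> then force all of
  this excess into a few configurations at the two ends of the list, each of which produces a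
  forbidden difference. Lower bound: the \<open>(2i + 5)\<close>-periodic set consisting of \<open>i\<close> points at
  spacing 2 followed by a gap of 7 is independent.
\<close>

locale chain_avoiding_1_5 =
  fixes a :: "nat \<Rightarrow> int" and n :: nat
  assumes gap_ge_2: "k < n \<Longrightarrow> 2 \<le> a (Suc k) - a k"
    and diff_ne_5: "j < l \<Longrightarrow> l \<le> n \<Longrightarrow> a l - a j \<noteq> 5"
begin

lemma diff_ge_2len: "j \<le> l \<Longrightarrow> l \<le> n \<Longrightarrow> 2 * int (l - j) \<le> a l - a j"
proof (induction l)
  case (Suc l)
  show ?case
  proof (cases "j = Suc l")
    case False
    with Suc have "j \<le> l" and "2 * int (l - j) \<le> a l - a j" by simp_all
    moreover have "2 \<le> a (Suc l) - a l" using gap_ge_2 Suc.prems by simp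
    ultimately show ?thesis by (simp add: Suc_diff_le)
  qed simp
qed simp

text \<open>An excess of exactly 1 over a run of at least two gaps sits in a gap 3 next to a gap 2,
  which together span 5.\<close>
lemma diff_ne_2len_plus_1: "j + 2 \<le> l \<Longrightarrow> l \<le> n \<Longrightarrow> a l - a j \<noteq> 2 * int (l - j) + 1"
proof (induction "l - j" arbitrary: j rule: less_induct)
  case less
  show ?case
  proof
    assume eq: "a l - a j = 2 * int (l - j) + 1"
    show False
    proof (cases "l = j + 2")
      case True
      then show False using eq diff_ne_5[of j l] less.prems by simp
    next
      case False
      then have len: "int (l - j) = int (l - Suc j) + 1" and "Suc j + 2 \<le> l" using less.prems by auto
      have "2 * int (l - Suc j) \<le> a l - a (Suc j)" using diff_ge_2len[of "Suc j" l] less.prems by simp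
      moreover have "2 \<le> a (Suc j) - a j" using gap_ge_2 less.prems by simp
      ultimately consider "a (Suc j) - a j = 2" | "a (Suc j) - a j = 3" using eq len by linarith
      then show False
      proof cases
        case 1
        then have "a l - a (Suc j) = 2 * int (l - Suc j) + 1" using eq len by linarith
        moreover have "l - Suc j < l - j" using less.prems by simp
        ultimately show False using less.hyps[of "Suc j"] \<open>Suc j + 2 \<le> l\<close> less.prems by simp
      next
        case 2
        have "2 * int (l - Suc (Suc j)) \<le> a l - a (Suc (Suc j))"
          using diff_ge_2len[of "Suc (Suc j)" l] less.prems by simp
        moreover have "2 \<le> a (Suc (Suc j)) - a (Suc j)" using gap_ge_2 less.prems by simp
        moreover have "int (l - j) = int (l - Suc (Suc j)) + 2" using less.prems by simp
        ultimately have "a (Suc (Suc j)) - a j = 5" using eq 2 by linarith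
        then show False using diff_ne_5[of j "Suc (Suc j)"] less.prems by simp
      qed
    qed
  qed
qed

text \<open>
  An excess of 3 over a run flanked by gaps 2 cannot start with a gap 3 (difference 5 with the
  left flank), nor with a gap 4 (the rest of the run together with the right flank would carry
  excess 1), nor with a gap 5; a leading gap 2 is removed by induction.
\<close>
lemma diff_ne_2len_plus_3:
  "1 \<le> j \<Longrightarrow> j \<le> l \<Longrightarrow> l + 1 \<le> n \<Longrightarrow> a j - a (j - 1) = 2 \<Longrightarrow> a (l + 1) - a l = 2
    \<Longrightarrow> a l - a j \<noteq> 2 * int (l - j) + 3"
proof (induction "l - j" arbitrary: j rule: less_induct)
  case less
  show ?case
  proof
    assume eq: "a l - a j = 2 * int (l - j) + 3"
    then have "Suc j \<le> l" using less.prems by (cases "l = j") auto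
    then have len: "int (l - j) = int (l - Suc j) + 1" by simp
    have "2 * int (l - Suc j) \<le> a l - a (Suc j)"
      using diff_ge_2len[of "Suc j" l] \<open>Suc j \<le> l\<close> less.prems by simp
    moreover have "2 \<le> a (Suc j) - a j" using gap_ge_2 \<open>Suc j \<le> l\<close> less.prems by simp
    ultimately consider "a (Suc j) - a j = 2" | "a (Suc j) - a j = 3"
      | "a (Suc j) - a j = 4" | "a (Suc j) - a j = 5"
      using eq len by linarith
    then show False
    proof cases
      case 1
      then have "a l - a (Suc j) = 2 * int (l - Suc j) + 3" using eq len by linarith
      moreover have "l - Suc j < l - j" using \<open>Suc j \<le> l\<close> by simp
      ultimately show False using less.hyps[of "Suc j"] \<open>Suc j \<le> l\<close> less.prems 1 by simp
    next
      case 2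
      then have "a (Suc j) - a (j - 1) = 5" using less.prems by simp
      moreover have "j - 1 < Suc j" "Suc j \<le> n" using \<open>Suc j \<le> l\<close> less.prems by auto
      ultimately show False using diff_ne_5 by blast
    next
      case 3
      have "l \<noteq> Suc j" using eq 3 len by auto
      moreover have "a (l + 1) - a (Suc j) = 2 * int (l - j) + 1"
        using eq 3 less.prems(5) by linarith
      ultimately show False
        using diff_ne_2len_plus_1[of "Suc j" "l + 1"] \<open>Suc j \<le> l\<close> less.prems by simp
    next
      case 4
      then show False using diff_ne_5[of j "Suc j"] \<open>Suc j \<le> l\<close> less.prems by simp
    qed
  qed
qed

text \<open>
  Writing \<open>n = m + 5\<close>, the lemmas above applied to the indices \<open>0, 1, 2, 3\<close> and
  \<open>m + 3, m + 4, m + 5\<close> leave a finite arithmetic problem in seven unknowns, which has no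
  solution when the span is at most \<open>2n + 4\<close>.
\<close>
lemma span_gt_2n_plus_4:
  assumes "5 \<le> n" and diff_ne_2n: "\<And>j l. j < l \<Longrightarrow> l \<le> n \<Longrightarrow> a l - a j \<noteq> 2 * int n"
  shows "2 * int n + 4 < a n - a 0"
proof (rule ccontr)
  assume span: "\<not> 2 * int n + 4 < a n - a 0"
  obtain m where m: "n = m + 5" using \<open>5 \<le> n\<close> by (metis add.commute le_Suc_ex)
  define x0 x1 x2 x3 where "x0 = a 0" and "x1 = a 1" and "x2 = a 2" and "x3 = a 3"
  define y2 y1 y0 where "y2 = a (m + 3)" and "y1 = a (m + 4)" and "y0 = a (m + 5)"
  note defs = x0_def x1_def x2_def x3_def y2_def y1_def y0_def
  note excess_1 = diff_ne_2len_plus_1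
  have gaps: "x1 - x0 \<ge> 2" "x2 - x1 \<ge> 2" "x3 - x2 \<ge> 2" "y1 - y2 \<ge> 2" "y0 - y1 \<ge> 2"
    using gap_ge_2[of 0] gap_ge_2[of 1] gap_ge_2[of 2] gap_ge_2[of "m + 3"] gap_ge_2[of "m + 4"] m
    by (auto simp: defs numeral_eq_Suc)
  have middle: "y2 - x3 \<ge> 2 * int m" using diff_ge_2len[of 3 "m + 3"] m by (simp add: defs)
  have total: "y0 - x0 \<le> 2 * int m + 14" using span m by (simp add: defs)
  have no_5: "x1 - x0 \<noteq> 5" "x2 - x1 \<noteq> 5" "x3 - x2 \<noteq> 5" "y1 - y2 \<noteq> 5" "y0 - y1 \<noteq> 5"
    using diff_ne_5[of 0 1] diff_ne_5[of 1 2] diff_ne_5[of 2 3]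
      diff_ne_5[of "m + 3" "m + 4"] diff_ne_5[of "m + 4" "m + 5"] m
    by (auto simp: defs)
  have no_2n: "y0 - x0 \<noteq> 2 * int m + 10" "y1 - x0 \<noteq> 2 * int m + 10" "y0 - x1 \<noteq> 2 * int m + 10"
     "y2 - x0 \<noteq> 2 * int m + 10" "y1 - x1 \<noteq> 2 * int m + 10" "y0 - x2 \<noteq> 2 * int m + 10"
    using diff_ne_2n[of 0 "m + 5"] diff_ne_2n[of 0 "m + 4"] diff_ne_2n[of 1 "m + 5"]
      diff_ne_2n[of 0 "m + 3"] diff_ne_2n[of 1 "m + 4"] diff_ne_2n[of 2 "m + 5"] m
    by (auto simp: defs)
  have no_excess_1: "x2 - x0 \<noteq> 5" "x3 - x0 \<noteq> 7" "y2 - x0 \<noteq> 2 * int m + 7"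
    "y1 - x0 \<noteq> 2 * int m + 9" "y0 - x0 \<noteq> 2 * int m + 11" "x3 - x1 \<noteq> 5"
    "y2 - x1 \<noteq> 2 * int m + 5" "y1 - x1 \<noteq> 2 * int m + 7" "y0 - x1 \<noteq> 2 * int m + 9"
    "y1 - x2 \<noteq> 2 * int m + 5" "y0 - x2 \<noteq> 2 * int m + 7" "y0 - x3 \<noteq> 2 * int m + 5"
    "y0 - y2 \<noteq> 5"
    using excess_1[of 0 2] excess_1[of 0 3] excess_1[of 0 "m + 3"] excess_1[of 0 "m + 4"]
      excess_1[of 0 "m + 5"] excess_1[of 1 3] excess_1[of 1 "m + 3"] excess_1[of 1 "m + 4"]
      excess_1[of 1 "m + 5"] excess_1[of 2 "m + 4"] excess_1[of 2 "m + 5"] excess_1[of 3 "m + 5"]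
      excess_1[of "m + 3" "m + 5"] m
    by (auto simp: defs algebra_simps)
  have no_excess_3: "\<not> (x3 - x2 = 2 \<and> y1 - y2 = 2 \<and> y2 - x3 = 2 * int m + 3)"
    using diff_ne_2len_plus_3[of 3 "m + 3"] m by (auto simp: add.commute defs)
  show False
    using gaps middle total no_5 no_2n no_excess_1 no_excess_3 by smt
qed

end

lemma dist_independent_diff_notin:
  assumes "dist_independent S A" "x \<in> A" "y \<in> A" "x < y"
  shows "nat (y - x) \<notin> S"
  using assms unfolding dist_independent_def dist_adj_def by fastforce

lemma independent_card_window_le:
  fixes i :: nat and A :: "int set"
  assumes ind: "dist_independent {1, 5, 2 * i} A" and "5 \<le> i"
  shows "card (A \<inter> {x..<x + int (2 * i + 5)}) \<le> i"
proof (rule ccontr)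
  define F where "F = A \<inter> {x..<x + int (2 * i + 5)}"
  assume "\<not> card (A \<inter> {x..<x + int (2 * i + 5)}) \<le> i"
  then have card_F: "i < card F" unfolding F_def by simp
  obtain xs where xs: "sorted_wrt (<) xs" "set xs = F" "length xs = card F"
    using sorted_list_of_set.finite_set_strict_sorted[of F] unfolding F_def by blast
  define a where "a k = xs ! k" for k
  have in_F: "a k \<in> F" if "k \<le> i" for k
    using that card_F xs(2,3) unfolding a_def by (metis le_less_trans nth_mem)
  have less: "a j < a k" if "j < k" "k \<le> i" for j k
    using sorted_wrt_nth_less[OF xs(1) that(1)] that card_F xs(3) unfolding a_def by simp
  have no_diff: "nat (a k - a j) \<notin> {1, 5, 2 * i}" if "j < k" "k \<le> i" for j k
    using dist_independent_diff_notin[OF ind _ _ less[OF that]] in_F that unfolding F_def by simp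
  interpret chain_avoiding_1_5 a i
  proof
    show "2 \<le> a (Suc k) - a k" if "k < i" for k
      using less[of k "Suc k"] no_diff[of k "Suc k"] that by fastforce
    show "a l - a j \<noteq> 5" if "j < l" "l \<le> i" for j l
      using no_diff[OF that] by auto
  qed
  have "a l - a j \<noteq> 2 * int i" if "j < l" "l \<le> i" for j l
    using no_diff[OF that] by (auto simp: nat_mult_distrib)
  then have "2 * int i + 4 < a i - a 0" using span_gt_2n_plus_4 \<open>5 \<le> i\<close> by blast
  moreover have "a i - a 0 \<le> 2 * int i + 4" using in_F[of i] in_F[of 0] unfolding F_def by auto
  ultimately show False by simp
qed

lemma card_Int_interval_le_mult:
  fixes A :: "int set"
  assumes window: "\<And>x. card (A \<inter> {x..<x + int p}) \<le> c"
  shows "card (A \<inter> {y..<y + int (m * p)}) \<le> m * c"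
proof (induction m)
  case (Suc m)
  have "0 \<le> int (m * p)" by simp
  then have "{y..<y + int (Suc m * p)} = {y..<y + int (m * p)} \<union> {y + int (m * p)..<y + int (m * p) + int p}"
    by (auto simp del: of_nat_mult)
  then have "card (A \<inter> {y..<y + int (Suc m * p)})
      \<le> card (A \<inter> {y..<y + int (m * p)}) + card (A \<inter> {y + int (m * p)..<y + int (m * p) + int p})"
    by (simp add: Int_Un_distrib card_Un_le)
  also have "\<dots> \<le> m * c + c" using Suc.IH window by (intro add_mono)
  finally show ?case by simp
qed simp

lemma upper_density_le_window_bound:
  fixes A :: "int set"
  assumes "0 < p" and window: "\<And>x. card (A \<inter> {x..<x + int p}) \<le> c"
  shows "upper_density A \<le> ereal (real c / real p)"
proof -
  have bound: "real (card (A \<inter> {- int N .. int N})) / real (2 * N + 1)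
      \<le> real c / real p + real c / real (2 * N + 1)" for N
  proof -
    define m where "m = (2 * N + 1) div p + 1"
    have "2 * N + 1 \<le> m * p"
      unfolding m_def add_mult_distrib mult_1
      using mod_less_divisor[OF \<open>0 < p\<close>, of "2 * N + 1"] div_mult_mod_eq[of "2 * N + 1" p]
      by linarith
    then have "int (2 * N + 1) \<le> int (m * p)" by (simp only: of_nat_le_iff)
    then have "A \<inter> {- int N .. int N} \<subseteq> A \<inter> {- int N..<- int N + int (m * p)}" by auto
    then have "card (A \<inter> {- int N .. int N}) \<le> card (A \<inter> {- int N..<- int N + int (m * p)})"
      by (intro card_mono) auto
    also have "\<dots> \<le> m * c" by (rule card_Int_interval_le_mult[OF window])
    finally have "real (card (A \<inter> {- int N .. int N})) \<le> real m * real c"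
      by (metis of_nat_le_iff of_nat_mult)
    also have "\<dots> \<le> (real (2 * N + 1) / real p + 1) * real c"
    proof (intro mult_right_mono)
      have "real ((2 * N + 1) div p) * real p \<le> real (2 * N + 1)"
        by (metis div_times_less_eq_dividend of_nat_le_iff of_nat_mult)
      then show "real m \<le> real (2 * N + 1) / real p + 1"
        unfolding m_def using \<open>0 < p\<close> by (simp add: field_simps)
    qed simp
    also have "\<dots> = (real c / real p + real c / real (2 * N + 1)) * real (2 * N + 1)"
      by (simp add: field_simps)
    finally have "real (card (A \<inter> {- int N .. int N}))
        \<le> (real c / real p + real c / real (2 * N + 1)) * real (2 * N + 1)" .
    moreover have "0 < real (2 * N + 1)" by simp
    ultimately show ?thesis by (simp only: pos_divide_le_eq)
  qed
  have "(\<lambda>N::nat. real c / real p + real c / real (2 * N + 1)) \<longlonglongrightarrow> real c / real p"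
    by real_asymp
  then have "limsup (\<lambda>N. ereal (real c / real p + real c / real (2 * N + 1))) = ereal (real c / real p)"
    by (intro lim_imp_Limsup) (simp_all add: lim_ereal)
  moreover have "upper_density A \<le> limsup (\<lambda>N. ereal (real c / real p + real c / real (2 * N + 1)))"
    unfolding upper_density_def by (intro Limsup_mono) (use bound in auto)
  ultimately show ?thesis by simp
qed

text \<open>With period \<open>2K + 1\<close>, the interval \<open>[-N, N]\<close> for \<open>N = k(2K + 1) + K\<close> is tiled by
  \<open>2k + 1\<close> translates of \<open>[-K, K]\<close>.\<close>
lemma card_periodic_Int_interval_ge:
  fixes A R :: "int set" and K k :: nat
  defines "p \<equiv> 2 * K + 1" and "N \<equiv> k * (2 * K + 1) + K"
  assumes R: "R \<subseteq> {- int K .. int K}" and periodic: "\<And>q r. r \<in> R \<Longrightarrow> q * int p + r \<in> A"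
  shows "(2 * k + 1) * card R \<le> card (A \<inter> {- int N .. int N})"
proof -
  define f :: "nat \<times> int \<Rightarrow> int" where "f = (\<lambda>(q, r). (int q - int k) * int p + r)"
  have "inj_on f ({0..<2 * k + 1} \<times> R)"
  proof (rule inj_onI, clarify)
    fix q r q' r' assume "r \<in> R" "r' \<in> R" and eq: "f (q, r) = f (q', r')"
    then have "(int q - int q') * int p = r' - r" unfolding f_def by (simp add: algebra_simps)
    moreover have "- int K \<le> r" "r \<le> int K" "- int K \<le> r'" "r' \<le> int K"
      using R \<open>r \<in> R\<close> \<open>r' \<in> R\<close> by auto
    ultimately have small: "\<bar>int q - int q'\<bar> * int p < int p"
      unfolding p_def abs_mult[symmetric] abs_less_iff by linarith
    have "q = q'"
    proof (rule ccontr)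
      assume "q \<noteq> q'"
      then have "1 * int p \<le> \<bar>int q - int q'\<bar> * int p" by (intro mult_right_mono) auto
      with small show False by simp
    qed
    then show "q = q' \<and> r = r'" using eq unfolding f_def by simp
  qed
  moreover have "f ` ({0..<2 * k + 1} \<times> R) \<subseteq> A \<inter> {- int N .. int N}"
  proof clarify
    fix q r assume "q \<in> {0..<2 * k + 1}" "r \<in> R"
    have "0 \<le> int q * int p" "int q * int p \<le> 2 * int k * int p"
      using \<open>q \<in> {0..<2 * k + 1}\<close> by (auto intro: mult_right_mono)
    moreover have "- int K \<le> r" "r \<le> int K" using R \<open>r \<in> R\<close> by auto
    ultimately have "- int N \<le> f (q, r) \<and> f (q, r) \<le> int N"
      unfolding f_def N_def p_def[symmetric] prod.case of_nat_add of_nat_mult left_diff_distrib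
      by (intro conjI) linarith+
    moreover have "f (q, r) \<in> A" using periodic \<open>r \<in> R\<close> unfolding f_def by simp
    ultimately show "f (q, r) \<in> A \<inter> {- int N .. int N}" by simp
  qed
  ultimately have "card ({0..<2 * k + 1} \<times> R) \<le> card (A \<inter> {- int N .. int N})"
    by (meson card_inj_on_le finite_Int finite_atLeastAtMost_int)
  then show ?thesis by (simp add: card_cartesian_product)
qed

lemma upper_density_ge_periodic:
  fixes A R :: "int set" and K :: nat
  defines "p \<equiv> 2 * K + 1"
  assumes R: "R \<subseteq> {- int K .. int K}" and periodic: "\<And>q r. r \<in> R \<Longrightarrow> q * int p + r \<in> A"
  shows "ereal (real (card R) / real p) \<le> upper_density A"
proof -
  define N where "N k = k * p + K" for k
  have count: "(2 * k + 1) * card R \<le> card (A \<inter> {- int (N k) .. int (N k)})" for k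
    unfolding N_def p_def by (rule card_periodic_Int_interval_ge[OF R periodic[unfolded p_def]])
  define X where "X M = ereal (real (card (A \<inter> {- int M .. int M})) / real (2 * M + 1))" for M
  have "ereal (real (card R) / real p) \<le> X (N k)" for k
  proof -
    have tiling: "real (2 * N k + 1) = real (2 * k + 1) * real p"
      unfolding N_def p_def by (simp add: algebra_simps)
    have "real (card R) / real p = real (2 * k + 1) * real (card R) / real (2 * N k + 1)"
      unfolding tiling by simp
    also have "\<dots> \<le> real (card (A \<inter> {- int (N k) .. int (N k)})) / real (2 * N k + 1)"
      using count[of k] by (intro divide_right_mono) (metis of_nat_le_iff of_nat_mult, simp)
    finally show ?thesis unfolding X_def by simp
  qed
  then have "ereal (real (card R) / real p) \<le> limsup (X \<circ> N)" by (intro le_Limsup) auto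
  also have "\<dots> \<le> limsup X"
    by (rule limsup_subseq_mono, rule strict_monoI) (unfold N_def, intro add_less_mono1 mult_less_mono1, auto simp: p_def)
  finally show ?thesis unfolding upper_density_def X_def .
qed

definition extremal_residues :: "nat \<Rightarrow> int set" where
  "extremal_residues i = (\<lambda>r. 2 * int r - int (i + 2)) ` {..<i}"

definition extremal_set :: "nat \<Rightarrow> int set" where
  "extremal_set i = {q * int (2 * i + 5) + r | q r. r \<in> extremal_residues i}"

lemma period_combination_notin_distances:
  fixes t s I :: int
  assumes "5 \<le> I" "\<bar>s\<bar> < I" "t * (2 * I + 5) + 2 * s \<noteq> 0"
  shows "\<bar>t * (2 * I + 5) + 2 * s\<bar> \<notin> {1, 5, 2 * I}"
proof -
  consider "t = -1" | "t = 0" | "t = 1" | "2 \<le> \<bar>t\<bar>" by linarith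
  then show ?thesis
  proof cases
    case 4
    then have "2 * (2 * I + 5) \<le> \<bar>t\<bar> * (2 * I + 5)" using assms by (intro mult_right_mono) auto
    then show ?thesis using assms by (auto simp: abs_mult)
  qed (use assms in \<open>simp; presburger\<close>)+
qed

lemma extremal_set_independent:
  assumes "5 \<le> i"
  shows "dist_independent {1, 5, 2 * i} (extremal_set i)"
  unfolding dist_independent_def
proof (intro ballI notI)
  fix x y assume "x \<in> extremal_set i" "y \<in> extremal_set i" and adj: "dist_adj {1, 5, 2 * i} x y"
  then obtain q r q' r' where "r < i" "r' < i"
    and "x = q * int (2 * i + 5) + 2 * int r - int (i + 2)"
    and "y = q' * int (2 * i + 5) + 2 * int r' - int (i + 2)"
    unfolding extremal_set_def extremal_residues_def by auto
  then have d: "x - y = (q - q') * (2 * int i + 5) + 2 * (int r - int r')"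
    by (simp add: algebra_simps)
  have "\<bar>(q - q') * (2 * int i + 5) + 2 * (int r - int r')\<bar> \<notin> {1, 5, 2 * int i}"
    using adj d \<open>r < i\<close> \<open>r' < i\<close> assms unfolding dist_adj_def
    by (intro period_combination_notin_distances) auto
  moreover have "nat \<bar>x - y\<bar> \<in> {1, 5, 2 * i}" using adj unfolding dist_adj_def by simp
  ultimately show False unfolding d by auto
qed

lemma card_extremal_residues: "card (extremal_residues i) = i"
  unfolding extremal_residues_def by (subst card_image) (auto simp: inj_on_def)

lemma upper_density_extremal_set_ge: "ereal (real i / real (2 * i + 5)) \<le> upper_density (extremal_set i)"
proof -
  have period: "2 * (i + 2) + 1 = 2 * i + 5" by simp
  have "extremal_residues i \<subseteq> {- int (i + 2) .. int (i + 2)}"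
    unfolding extremal_residues_def by auto
  moreover have "q * int (2 * (i + 2) + 1) + r \<in> extremal_set i" if "r \<in> extremal_residues i" for q r
    using that unfolding period extremal_set_def by blast
  ultimately have "ereal (real (card (extremal_residues i)) / real (2 * (i + 2) + 1))
      \<le> upper_density (extremal_set i)"
    by (rule upper_density_ge_periodic)
  then show ?thesis unfolding card_extremal_residues period .
qed

theorem theorem28:
  fixes i :: nat
  assumes "i \<ge> 5"
  shows "indep_ratio {1, 5, 2 * i} = ereal (real i / real (2 * i + 5))"
proof (rule antisym)
  have "upper_density A \<le> ereal (real i / real (2 * i + 5))" if "dist_independent {1, 5, 2 * i} A" for A
    by (rule upper_density_le_window_bound) (use independent_card_window_le[OF that assms] in auto)
  then show "indep_ratio {1, 5, 2 * i} \<le> ereal (real i / real (2 * i + 5))"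
    unfolding indep_ratio_def by (auto intro: SUP_least)
  have "upper_density (extremal_set i) \<le> indep_ratio {1, 5, 2 * i}"
    unfolding indep_ratio_def using extremal_set_independent[OF assms] by (auto intro: SUP_upper)
  with upper_density_extremal_set_ge show "ereal (real i / real (2 * i + 5)) \<le> indep_ratio {1, 5, 2 * i}"
    by (rule order.trans)
qed

end
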